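(* For every ordered forest $\mathcal F$ let $S^{\mathcal F}(A)\in\mathbb K\langle\langle A\rangle\rangle$ be the sum of all $\mathcal F$-compatible words over $A$. Then: (i) the series $S^{\mathcal F}(A)$, $\mathcal F$ ranging over all ordered forests, are linearly independent; (ii) for all ordered forests $\mathcal F,\mathcal G$, $S^{\mathcal F}(A)S^{\mathcal G}(A)=S^{\mathcal F\mathcal G}(A)$; (iii) for every ordered forest $\mathcal F$, letting letters of $A$ commute with letters of $B$, $$S^{\mathcal F}(A\oplus B)=\sum_{V}S^{\mathrm{Roo}_V\mathcal F}(A)\,S^{\mathrm{Lea}_V\mathcal F}(B),$$ the sum over admissible cuts $V$ of $\mathcal F$. Consequently $\mathcal F\mapsto S^{\mathcal F}(A)$ is an isomorphism of $\mathbf H_o$ onto the span of the $S^{\mathcal F}$, where the coproduct $\Delta$ of $\mathbf H_o$ corresponds to $P(A)\mapsto P(A\oplus B)$ under the identification $P(A)Q(B)\leftrightarrow P\otimes Q$.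
   Context: Let $\mathbb K$ be a field of characteristic $0$. An ordered forest on $n$ vertices ($n\ge 0$) is a rooted forest whose vertex set is $[n]=\{1,\dots,n\}$ with its natural total order (the labels need not be related to the tree structure); it is determined by its set of roots and the parent map $p$ on non-root vertices. A vertex $w$ is a descendant of $v$ if $v$ is obtained from $w$ by applying $p$ at least once. For $I\subseteq[n]$ with $|I|=k$, the restriction $\mathcal F_{|I}$ is the ordered forest on $[k]$ obtained by keeping the vertices in $I$ and the edges of $\mathcal F$ between two vertices of $I$ (a vertex of $I$ whose parent is not in $I$ becomes a root), relabelled via the unique increasing bijection $I\to[k]$. An admissible cut of $\mathcal F$ is a subset $V\subseteq[n]$ (possibly empty) containing no two distinct vertices one of which is a descendant of the other. For such $V$, let $L_V$ be the set of vertices lying in $V$ or descending from an element of $V$, and set $\mathrm{Lea}_V\mathcal F=\mathcal F_{|L_V}$, $\mathrm{Roo}_V\mathcal F=\mathcal F_{|[n]\setminus L_V}$. For ordered forests $\mathcal F$ on $[n]$ and $\mathcal G$ on $[m]$, $\mathcal F\mathcal G$ is the ordered forest on $[n+m]$ which is the disjoint union of $\mathcal F$ and of $\mathcal G$ with labels shifted by $n$. $\mathbf H_o$ is the $\mathbb K$-vector space with basis the ordered forests, with product extending $(\mathcal F,\mathcal G)\mapsto\mathcal F\mathcal G$ and coproduct $\Delta(\mathcal F)=\sum_{V}\mathrm{Roo}_V\mathcal F\otimes\mathrm{Lea}_V\mathcal F$ over admissible cuts $V$. First realization: $A=\{a_{ij}: i,j\in\mathbb Z,\ 0\le i<j\}$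 with the relation $a_{ij}\prec a_{kl}$ iff $j=k$. A word $w=w_1\cdots w_n$ over $A$ is $\mathcal F$-compatible ($\mathcal F$ on $[n]$) if $w_k\prec w_l$ whenever $k$ is the parent of $l$ in $\mathcal F$ (no condition on roots). If $B=\{b_{ij}:0\le i<j\}$ is a disjoint copy of $A$ with the same relation, $A\oplus B$ is the disjoint union with $\prec$ restricting to the given relations on $A$ and on $B$, and additionally $a\prec b$ for all $a\in A$, $b\in B$ (and never $b\prec a$). $S^{\mathcal F}(A\oplus B)$ is the sum of all $\mathcal F$-compatible words over $A\oplus B$. *)

theory Defs
  imports Main
begin

text \<open>An ordered forest on [n] is a pair (n, p) where p v = Some u means u is the
parent of v, and p v = None means v is a root (or v is not a vertex).\<close>

type_synonym oforest = "nat \<times> (nat \<Rightarrow> nat option)"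

definition of_edges :: "oforest \<Rightarrow> (nat \<times> nat) set" where
  "of_edges F = {(u, v). snd F v = Some u}"

definition oforests :: "oforest set" where
  "oforests = {(n, p). (\<forall>v. p v \<noteq> None \<longrightarrow> v \<in> {1..n})
                     \<and> (\<forall>v u. p v = Some u \<longrightarrow> u \<in> {1..n})
                     \<and> (\<forall>v. (v, v) \<notin> (of_edges (n, p))\<^sup>+)}"

definition is_desc :: "oforest \<Rightarrow> nat \<Rightarrow> nat \<Rightarrow> bool" where
  "is_desc F w v \<longleftrightarrow> (v, w) \<in> (of_edges F)\<^sup>+"

definition admissible_cut :: "oforest \<Rightarrow> nat set \<Rightarrow> bool" where
  "admissible_cut F V \<longleftrightarrow> V \<subseteq> {1..fst F} \<and>
     (\<forall>v\<in>V. \<forall>w\<in>V. v \<noteq> w \<longrightarrow> \<not> is_desc F w v)"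

definition cut_L :: "oforest \<Rightarrow> nat set \<Rightarrow> nat set" where
  "cut_L F V = {w \<in> {1..fst F}. w \<in> V \<or> (\<exists>v\<in>V. is_desc F w v)}"

text \<open>Restriction to I \<subseteq> [n], relabelled by the increasing bijection I \<rightarrow> [card I].\<close>
definition of_restrict :: "oforest \<Rightarrow> nat set \<Rightarrow> oforest" where
  "of_restrict F I = (card I, (\<lambda>i. if i \<in> {1..card I} then
      (case snd F (sorted_list_of_set I ! (i - 1)) of
         None \<Rightarrow> None
       | Some u \<Rightarrow> if u \<in> I then Some (card {x \<in> I. x \<le> u}) else None)
      else None))"

definition Lea :: "oforest \<Rightarrow> nat set \<Rightarrow> oforest" where
  "Lea F V = of_restrict F (cut_L F V)"

definition Roo :: "oforest \<Rightarrow> nat set \<Rightarrow> oforest" where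
  "Roo F V = of_restrict F ({1..fst F} - cut_L F V)"

definition of_prod :: "oforest \<Rightarrow> oforest \<Rightarrow> oforest" where
  "of_prod F G = (fst F + fst G, (\<lambda>v. if v \<le> fst F then snd F v
                     else map_option (\<lambda>u. u + fst F) (snd G (v - fst F))))"

text \<open>Noncommutative formal power series over letters of type 'a: functions from words to 'k.\<close>

definition compatible :: "('a \<Rightarrow> 'a \<Rightarrow> bool) \<Rightarrow> oforest \<Rightarrow> 'a list \<Rightarrow> bool" where
  "compatible prec F w \<longleftrightarrow> length w = fst F \<and>
     (\<forall>k l. snd F l = Some k \<longrightarrow> prec (w ! (k - 1)) (w ! (l - 1)))"

definition SF :: "'a set \<Rightarrow> ('a \<Rightarrow> 'a \<Rightarrow> bool) \<Rightarrow> oforest \<Rightarrow> 'a list \<Rightarrow> 'k::field_char_0" where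
  "SF Alph prec F w = (if w \<in> lists Alph \<and> compatible prec F w then 1 else 0)"

definition ser_mult :: "('a list \<Rightarrow> 'k::field_char_0) \<Rightarrow> ('a list \<Rightarrow> 'k) \<Rightarrow> 'a list \<Rightarrow> 'k" where
  "ser_mult S T w = (\<Sum>i\<le>length w. S (take i w) * T (drop i w))"

text \<open>The alphabet A = {a_ij : 0 \<le> i < j}, a_ij \<prec> a_kl iff j = k.\<close>
definition alphA :: "(int \<times> int) set" where
  "alphA = {(i, j). 0 \<le> i \<and> i < j}"

definition precA :: "int \<times> int \<Rightarrow> int \<times> int \<Rightarrow> bool" where
  "precA a b \<longleftrightarrow> snd a = fst b"

text \<open>A \<oplus> B: letters Inl a (from A), Inr b (from the copy B).\<close>
definition alphAB :: "((int \<times> int) + (int \<times> int)) set" where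
  "alphAB = Inl ` alphA \<union> Inr ` alphA"

fun precAB :: "(int \<times> int) + (int \<times> int) \<Rightarrow> (int \<times> int) + (int \<times> int) \<Rightarrow> bool" where
  "precAB (Inl a) (Inl a') = precA a a'"
| "precAB (Inr b) (Inr b') = precA b b'"
| "precAB (Inl a) (Inr b) = True"
| "precAB (Inr b) (Inl a) = False"

end

theory Submission
  imports Defs
begin

text \<open>
  (ii) In the Cauchy product of S^F and S^G a word contributes only through its splitting
  after the first n = |F| letters, and the two halves are compatible with F and G exactly
  when the whole word is compatible with FG.

  (i) To each forest F we attach a word w_F over A: position v carries the letter
  a_{lab(p v), lab v}, where lab increases strictly along edges and is injective.  Then
  S^F(w_F) = 1, and S^G(w_F) \<noteq> 0 forces every edge of G to be an edge of F.  So the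
  family is triangular with respect to the number of edges, whence independent.

  (iii) A word w over A \<oplus> B is a shuffle of its A-part u and its B-part v and is determined
  by the set L of positions of its B-letters.  If w is F-compatible then L is closed under
  taking children, and then w is F-compatible iff u is compatible with F restricted to the
  complement of L and v with F restricted to L.  Closed sets are exactly the sets L_V of
  admissible cuts V, bijectively, which turns the sum over shuffles into the sum over cuts.
\<close>

lemma oforestsD:
  assumes "F \<in> oforests"
  shows "snd F v \<noteq> None \<Longrightarrow> v \<in> {1..fst F}"
    and "snd F v = Some u \<Longrightarrow> u \<in> {1..fst F}"
    and "(x, x) \<notin> (of_edges F)\<^sup>+"
  using assms unfolding oforests_def by (cases F; auto)+

lemma of_edges_iff [simp]: "(u, v) \<in> of_edges F \<longleftrightarrow> snd F v = Some u"
  by (simp add: of_edges_def)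

lemma oforests_edge:
  assumes "F \<in> oforests" "snd F v = Some u"
  shows "v \<in> {1..fst F}" "u \<in> {1..fst F}"
  using oforestsD[OF assms(1)] assms(2) by auto

lemma oforests_path_range:
  assumes "F \<in> oforests" "(u, v) \<in> (of_edges F)\<^sup>+"
  shows "u \<in> {1..fst F}"
  using assms(2) by (induct rule: trancl_induct) (auto dest: oforests_edge[OF assms(1)])

text \<open>The height of a vertex is its number of proper ancestors; it strictly increases from
  parent to child and serves as an induction measure.\<close>

definition anc :: "oforest \<Rightarrow> nat \<Rightarrow> nat set" where
  "anc F v = {u. (u, v) \<in> (of_edges F)\<^sup>+}"

definition ht :: "oforest \<Rightarrow> nat \<Rightarrow> nat" where
  "ht F v = card (anc F v)"

lemma ht_less:
  assumes F: "F \<in> oforests" and e: "snd F v = Some u"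
  shows "ht F u < ht F v"
proof -
  have fin: "finite (anc F v)"
    by (rule finite_subset[of _ "{1..fst F}"]) (auto simp: anc_def dest: oforests_path_range[OF F])
  have "anc F u \<subseteq> anc F v"
    using e by (auto simp: anc_def intro: trancl_into_trancl)
  moreover have "u \<in> anc F v" "u \<notin> anc F u"
    using e oforestsD(3)[OF F] by (auto simp: anc_def)
  ultimately have "anc F u \<subset> anc F v" by blast
  then show ?thesis unfolding ht_def using fin by (rule psubset_card_mono[rotated])
qed

section \<open>Part (ii): products\<close>

lemma of_prod_edge:
  assumes F: "F \<in> oforests" and G: "G \<in> oforests"
  shows "snd (of_prod F G) l = Some k \<longleftrightarrow>
           snd F l = Some k \<or>
           (fst F < l \<and> fst F < k \<and> snd G (l - fst F) = Some (k - fst F))"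
proof (cases "l \<le> fst F")
  case True
  then show ?thesis by (auto simp: of_prod_def)
next
  case False
  have "snd F l = None" using False oforestsD(1)[OF F, of l] by (cases "snd F l") auto
  moreover have "snd G (l - fst F) = Some k' \<Longrightarrow> 1 \<le> k'" for k'
    using oforests_edge(2)[OF G] by fastforce
  ultimately show ?thesis using False by (auto simp: of_prod_def)
qed

lemma compatible_of_prod:
  assumes F: "F \<in> oforests" and G: "G \<in> oforests" and x: "length x = fst F"
  shows "compatible prec (of_prod F G) (x @ y) \<longleftrightarrow>
           compatible prec F x \<and> compatible prec G y"
proof -
  let ?n = "fst F" and ?w = "x @ y"
  have in_x: "?w ! (k - 1) = x ! (k - 1) \<and> ?w ! (l - 1) = x ! (l - 1)" if "snd F l = Some k" for k l
    using oforests_edge[OF F that] x by (auto simp: nth_append)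
  have left: "(\<forall>k l. snd F l = Some k \<longrightarrow> prec (?w ! (k - 1)) (?w ! (l - 1))) \<longleftrightarrow>
              (\<forall>k l. snd F l = Some k \<longrightarrow> prec (x ! (k - 1)) (x ! (l - 1)))"
    using in_x by metis
  have shift: "?w ! (k - 1) = y ! (k - ?n - 1)" if "?n < k" for k
    using that x by (auto simp: nth_append)
  have right: "(\<forall>k l. ?n < l \<and> ?n < k \<and> snd G (l - ?n) = Some (k - ?n) \<longrightarrow>
                  prec (?w ! (k - 1)) (?w ! (l - 1))) \<longleftrightarrow>
               (\<forall>k l. snd G l = Some k \<longrightarrow> prec (y ! (k - 1)) (y ! (l - 1)))"
  proof
    assume A: "\<forall>k l. ?n < l \<and> ?n < k \<and> snd G (l - ?n) = Some (k - ?n) \<longrightarrow>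
                  prec (?w ! (k - 1)) (?w ! (l - 1))"
    show "\<forall>k l. snd G l = Some k \<longrightarrow> prec (y ! (k - 1)) (y ! (l - 1))"
    proof (intro allI impI)
      fix k l assume e: "snd G l = Some k"
      then have "1 \<le> k" "1 \<le> l" using oforests_edge[OF G e] by auto
      then show "prec (y ! (k - 1)) (y ! (l - 1))"
        using A[rule_format, of "l + ?n" "k + ?n"] e shift[of "k + ?n"] shift[of "l + ?n"] by simp
    qed
  next
    assume B: "\<forall>k l. snd G l = Some k \<longrightarrow> prec (y ! (k - 1)) (y ! (l - 1))"
    show "\<forall>k l. ?n < l \<and> ?n < k \<and> snd G (l - ?n) = Some (k - ?n) \<longrightarrow>
                  prec (?w ! (k - 1)) (?w ! (l - 1))"
      using B shift by (metis diff_diff_left)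
  qed
  show ?thesis
    unfolding compatible_def of_prod_edge[OF F G] using left right x
    by (auto simp: of_prod_def)
qed

text \<open>The series of a concatenation is the product of the series.  In the Cauchy product
  only the splitting of a word after its first |F| letters survives.\<close>

lemma ser_mult_SF:
  assumes F: "F \<in> oforests" and G: "G \<in> oforests"
  shows "ser_mult (SF Alph prec F) (SF Alph prec G)
           = (SF Alph prec (of_prod F G) :: _ \<Rightarrow> 'k::field_char_0)"
proof
  fix w :: "'a list"
  let ?n = "fst F"
  have others: "SF Alph prec F (take i w) = (0::'k)" if "i \<noteq> ?n" "i \<le> length w" for i
    using that by (simp add: SF_def compatible_def)
  show "ser_mult (SF Alph prec F) (SF Alph prec G) w = (SF Alph prec (of_prod F G) w :: 'k)"
  proof (cases "?n \<le> length w")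
    case True
    have "ser_mult (SF Alph prec F) (SF Alph prec G) w
          = SF Alph prec F (take ?n w) * (SF Alph prec G (drop ?n w) :: 'k)"
      unfolding ser_mult_def using True others by (subst sum.remove[of _ ?n]) auto
    also have "\<dots> = SF Alph prec (of_prod F G) (take ?n w @ drop ?n w)"
      using compatible_of_prod[OF F G, of "take ?n w" prec "drop ?n w"] True
        append_in_lists_conv[of "take ?n w" "drop ?n w" Alph]
      by (simp add: SF_def)
    finally show ?thesis by simp
  next
    case False
    then show ?thesis
      by (auto simp: ser_mult_def SF_def compatible_def of_prod_def intro!: sum.neutral)
  qed
qed

section \<open>Part (i): linear independence\<close>

lemma triangular_linear_independence:
  fixes f :: "'i \<Rightarrow> 'x \<Rightarrow> 'k::field" and c :: "'i \<Rightarrow> 'k"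
    and wit :: "'i \<Rightarrow> 'x" and weight :: "'i \<Rightarrow> nat"
  assumes fin: "finite X"
    and nonzero: "\<And>F. F \<in> X \<Longrightarrow> f F (wit F) \<noteq> 0"
    and lower: "\<And>F G. F \<in> X \<Longrightarrow> G \<in> X \<Longrightarrow> G \<noteq> F \<Longrightarrow> f G (wit F) \<noteq> 0 \<Longrightarrow> weight G < weight F"
    and zero: "\<And>x. (\<Sum>F\<in>X. c F * f F x) = 0"
    and F: "F \<in> X"
  shows "c F = 0"
  using F
proof (induction "weight F" arbitrary: F rule: less_induct)
  case less
  have "(\<Sum>G\<in>X - {F}. c G * f G (wit F)) = 0"
  proof (rule sum.neutral, rule ballI)
    fix G assume G: "G \<in> X - {F}"
    show "c G * f G (wit F) = 0"
      using less.hyps[of G] lower[of F G] less.prems G by (cases "f G (wit F) = 0") auto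
  qed
  then have "c F * f F (wit F) = 0"
    using zero[of "wit F"] sum.remove[OF fin less.prems, of "\<lambda>G. c G * f G (wit F)"] by simp
  then show ?case using nonzero[OF less.prems] by simp
qed

text \<open>Every forest has a word singled out by it: label vertex v by an integer label F v which
  increases strictly along edges and is injective on [n]; the letter at position v is
  a_{label(parent v), label v} (with 0 for roots).  This word is F-compatible, and it is
  G-compatible only if every edge of G is an edge of F.\<close>

definition label :: "oforest \<Rightarrow> nat \<Rightarrow> int" where
  "label F v = int ((fst F + 1) * ht F v + v)"

definition forest_word :: "oforest \<Rightarrow> (int \<times> int) list" where
  "forest_word F = map (\<lambda>v. (case snd F v of None \<Rightarrow> 0 | Some u \<Rightarrow> label F u, label F v))
                       [1..<fst F + 1]"

lemma length_forest_word [simp]: "length (forest_word F) = fst F"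
  by (simp add: forest_word_def)

lemma forest_word_nth:
  "v \<in> {1..fst F} \<Longrightarrow>
   forest_word F ! (v - 1) = (case snd F v of None \<Rightarrow> 0 | Some u \<Rightarrow> label F u, label F v)"
  by (auto simp: forest_word_def nth_append simp del: upt_Suc)

lemma label_inj:
  assumes "a \<in> {1..fst F}" "b \<in> {1..fst F}" "label F a = label F b"
  shows "a = b"
proof -
  let ?m = "fst F + 1"
  have residue: "(?m * ht F x + x) mod ?m = x" if "x \<in> {1..fst F}" for x
    using mod_mult_self4[of ?m "ht F x" x] that by (simp only:) simp
  have "?m * ht F a + a = ?m * ht F b + b"
    using assms(3) by (simp only: label_def of_nat_eq_iff)
  then show ?thesis using residue[OF assms(1)] residue[OF assms(2)] by simp
qed

lemma label_pos: "1 \<le> v \<Longrightarrow> 1 \<le> label F v"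
  unfolding label_def by linarith

lemma label_less:
  assumes F: "F \<in> oforests" and e: "snd F v = Some u"
  shows "label F u < label F v"
proof -
  let ?m = "fst F + 1"
  have "u \<le> fst F" using oforests_edge[OF F e] by auto
  then have "?m * ht F u + u < ?m * (ht F u + 1)" by simp
  also have "\<dots> \<le> ?m * ht F v" using ht_less[OF F e] by (intro mult_le_mono2) simp
  finally show ?thesis unfolding label_def by linarith
qed

lemma SF_forest_word:
  assumes F: "F \<in> oforests"
  shows "SF alphA precA F (forest_word F) = 1"
proof -
  have "(case snd F v of None \<Rightarrow> 0 | Some u \<Rightarrow> label F u, label F v) \<in> alphA"
    if v: "v \<in> {1..fst F}" for v
  proof (cases "snd F v")
    case None
    then show ?thesis using label_pos[of v F] v by (simp add: alphA_def)
  next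
    case (Some u)
    then show ?thesis
      using label_less[OF F Some] label_pos[of u F] oforests_edge(2)[OF F Some]
      by (simp add: alphA_def)
  qed
  then have "forest_word F \<in> lists alphA"
    by (auto simp: forest_word_def)
  moreover have "precA (forest_word F ! (k - 1)) (forest_word F ! (l - 1))"
    if e: "snd F l = Some k" for k l
    using forest_word_nth[of k F] forest_word_nth[of l F] oforests_edge[OF F e] e
    by (simp add: precA_def)
  then have "compatible precA F (forest_word F)" by (simp add: compatible_def)
  ultimately show ?thesis by (simp add: SF_def)
qed

lemma forest_word_compatible_sub:
  assumes F: "F \<in> oforests" and G: "G \<in> oforests" and c: "compatible precA G (forest_word F)"
    and e: "snd G l = Some k"
  shows "snd F l = Some k"
proof -
  have size: "fst G = fst F" using c by (simp add: compatible_def)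
  with oforests_edge[OF G e] have kl: "k \<in> {1..fst F}" "l \<in> {1..fst F}" by auto
  from c e have "precA (forest_word F ! (k - 1)) (forest_word F ! (l - 1))"
    by (simp add: compatible_def)
  then have eq: "label F k = (case snd F l of None \<Rightarrow> 0 | Some u \<Rightarrow> label F u)"
    using forest_word_nth[OF kl(1)] forest_word_nth[OF kl(2)] by (simp add: precA_def)
  show ?thesis
  proof (cases "snd F l")
    case None then show ?thesis using eq label_pos[of k F] kl by simp
  next
    case (Some u)
    then show ?thesis using eq label_inj[of k F u] kl oforests_edge(2)[OF F Some] by simp
  qed
qed

definition edge_count :: "oforest \<Rightarrow> nat" where
  "edge_count F = card {v \<in> {1..fst F}. snd F v \<noteq> None}"

lemma edge_count_less:
  assumes F: "F \<in> oforests" and ne: "G \<noteq> F" and size: "fst G = fst F"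
    and sub: "\<And>l k. snd G l = Some k \<Longrightarrow> snd F l = Some k"
  shows "edge_count G < edge_count F"
proof -
  have sub': "snd G v \<noteq> None \<Longrightarrow> snd F v \<noteq> None" for v
    by (cases "snd G v") (auto dest: sub)
  have "snd G \<noteq> snd F" using ne size by (cases F, cases G) auto
  then obtain l where l: "snd G l \<noteq> snd F l" by auto
  then have "snd G l = None" by (cases "snd G l") (auto dest: sub)
  with l have "snd F l \<noteq> None" by simp
  moreover have "l \<in> {1..fst F}" using \<open>snd F l \<noteq> None\<close> oforestsD(1)[OF F] by blast
  moreover have "{v \<in> {1..fst G}. snd G v \<noteq> None} \<subseteq> {v \<in> {1..fst F}. snd F v \<noteq> None}"
    using sub' size by auto
  ultimately have "{v \<in> {1..fst G}. snd G v \<noteq> None} \<subset> {v \<in> {1..fst F}. snd F v \<noteq> None}"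
    using \<open>snd G l = None\<close> by blast
  then show ?thesis unfolding edge_count_def by (rule psubset_card_mono[rotated]) simp
qed

lemma SF_linear_independent:
  fixes c :: "oforest \<Rightarrow> 'k::field_char_0"
  assumes fin: "finite X" and X: "X \<subseteq> oforests"
    and zero: "\<And>w. (\<Sum>F\<in>X. c F * SF alphA precA F w) = 0"
    and F: "F \<in> X"
  shows "c F = 0"
proof (rule triangular_linear_independence[OF fin _ _ zero F])
  fix F assume "F \<in> X"
  then have "F \<in> oforests" using X by blast
  then show "SF alphA precA F (forest_word F) \<noteq> (0::'k)" by (simp add: SF_forest_word)
next
  fix F G assume FG: "F \<in> X" "G \<in> X" "G \<noteq> F" and "SF alphA precA G (forest_word F) \<noteq> (0::'k)"
  then have c: "compatible precA G (forest_word F)" by (simp add: SF_def split: if_splits)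
  have "F \<in> oforests" "G \<in> oforests" using FG X by blast+
  moreover have "fst G = fst F" using c by (simp add: compatible_def)
  ultimately show "edge_count G < edge_count F"
    using edge_count_less[OF _ \<open>G \<noteq> F\<close>] forest_word_compatible_sub[OF _ _ c] by blast
qed

section \<open>Part (iii): the coproduct\<close>

definition rank :: "nat set \<Rightarrow> nat \<Rightarrow> nat" where
  "rank I x = card {y \<in> I. y \<le> x}"

lemma rank_sorted_nth:
  assumes fin: "finite I" and j: "j < card I"
  shows "rank I (sorted_list_of_set I ! j) = Suc j"
proof -
  let ?s = "sorted_list_of_set I"
  have ss: "sorted_wrt (<) ?s" by (rule strict_sorted_list_of_set)
  have ls: "length ?s = card I" by simp
  have "{y \<in> I. y \<le> ?s ! j} = (\<lambda>t. ?s ! t) ` {..j}"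
  proof
    show "{y \<in> I. y \<le> ?s ! j} \<subseteq> (\<lambda>t. ?s ! t) ` {..j}"
    proof
      fix y assume y: "y \<in> {y \<in> I. y \<le> ?s ! j}"
      then have "y \<in> set ?s" using fin by simp
      then obtain t where t: "t < length ?s" "y = ?s ! t" by (metis in_set_conv_nth)
      have "\<not> j < t" using sorted_wrt_nth_less[OF ss, of j t] t y by auto
      then show "y \<in> (\<lambda>t. ?s ! t) ` {..j}" using t by auto
    qed
    show "(\<lambda>t. ?s ! t) ` {..j} \<subseteq> {y \<in> I. y \<le> ?s ! j}"
    proof
      fix y assume "y \<in> (\<lambda>t. ?s ! t) ` {..j}"
      then obtain t where t: "t \<le> j" "y = ?s ! t" by auto
      have "y \<in> I" using t j ls fin by (metis le_less_trans nth_mem set_sorted_list_of_set)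
      moreover have "y \<le> ?s ! j"
        using t sorted_wrt_nth_less[OF ss, of t j] j ls by (cases "t = j") auto
      ultimately show "y \<in> {y \<in> I. y \<le> ?s ! j}" by simp
    qed
  qed
  moreover have "inj_on (\<lambda>t. ?s ! t) {..j}"
    using j ls by (auto simp: inj_on_def nth_eq_iff_index_eq)
  ultimately show ?thesis unfolding rank_def by (simp add: card_image)
qed

lemma of_restrict_edge:
  "snd (of_restrict F I) i = Some k \<longleftrightarrow>
     i \<in> {1..card I} \<and> (\<exists>u\<in>I. snd F (sorted_list_of_set I ! (i - 1)) = Some u \<and> k = rank I u)"
  by (auto simp: of_restrict_def rank_def split: option.split)

lemma compatible_of_restrict:
  assumes fin: "finite I"
  shows "compatible prec (of_restrict F I) s \<longleftrightarrow> length s = card I \<and>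
    (\<forall>l\<in>I. \<forall>k\<in>I. snd F l = Some k \<longrightarrow> prec (s ! (rank I k - 1)) (s ! (rank I l - 1)))"
proof -
  let ?s = "sorted_list_of_set I"
  have enum: "l = ?s ! (rank I l - 1) \<and> rank I l \<in> {1..card I}" if "l \<in> I" for l
  proof -
    have "l \<in> set ?s" using that fin by simp
    then obtain j where j: "j < card I" "?s ! j = l" by (auto simp: in_set_conv_nth)
    then show ?thesis using rank_sorted_nth[OF fin j(1)] by auto
  qed
  have enum_in: "?s ! (i - 1) \<in> I \<and> rank I (?s ! (i - 1)) = i" if "i \<in> {1..card I}" for i
    using that rank_sorted_nth[OF fin, of "i - 1"] fin nth_mem[of "i - 1" ?s] by auto
  have "(\<forall>k i. snd (of_restrict F I) i = Some k \<longrightarrow> prec (s ! (k - 1)) (s ! (i - 1))) \<longleftrightarrow>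
        (\<forall>l\<in>I. \<forall>k\<in>I. snd F l = Some k \<longrightarrow> prec (s ! (rank I k - 1)) (s ! (rank I l - 1)))"
    unfolding of_restrict_edge using enum enum_in by metis
  then show ?thesis by (simp add: compatible_def of_restrict_def)
qed

definition positions :: "('a \<Rightarrow> bool) \<Rightarrow> 'a list \<Rightarrow> nat set" where
  "positions P w = {x \<in> {1..length w}. P (w ! (x - 1))}"

lemma card_positions: "card (positions P w) = length (filter P w)"
proof -
  have "x \<in> positions P w \<longleftrightarrow> x \<in> Suc ` {i. i < length w \<and> P (w ! i)}" for x
    by (cases x) (auto simp: positions_def)
  then have "positions P w = Suc ` {i. i < length w \<and> P (w ! i)}" by blast
  then show ?thesis by (simp add: card_image length_filter_conv_card)
qed

lemma positions_nth:
  assumes x: "x \<in> positions P w"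
  shows "rank (positions P w) x - 1 < length (filter P w)"
    and "filter P w ! (rank (positions P w) x - 1) = w ! (x - 1)"
proof -
  have x1: "1 \<le> x" "x \<le> length w" "P (w ! (x - 1))" using x by (auto simp: positions_def)
  let ?K = "{i. i < x - 1 \<and> P (w ! i)}"
  have "y \<in> {y \<in> positions P w. y \<le> x} \<longleftrightarrow> y \<in> insert x (Suc ` ?K)" for y
    using x x1 by (cases y) (auto simp: positions_def)
  then have "{y \<in> positions P w. y \<le> x} = insert x (Suc ` ?K)" by blast
  moreover have "x \<notin> Suc ` ?K" "finite ?K" by auto
  moreover have "{i. i < length (take (x - 1) w) \<and> P (take (x - 1) w ! i)} = ?K"
    using x1 by auto
  ultimately have rank: "rank (positions P w) x = Suc (length (filter P (take (x - 1) w)))"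
    unfolding rank_def by (simp add: card_image length_filter_conv_card)
  have "w = take (x - 1) w @ w ! (x - 1) # drop x w"
    using id_take_nth_drop[of "x - 1" w] x1 by simp
  then have "filter P w = filter P (take (x - 1) w) @ w ! (x - 1) # filter P (drop x w)"
    using x1(3) by (metis filter.simps(2) filter_append)
  then show "rank (positions P w) x - 1 < length (filter P w)"
    and "filter P w ! (rank (positions P w) x - 1) = w ! (x - 1)"
    unfolding rank by (simp_all add: nth_append)
qed

lemma positions_snoc:
  "positions P (w @ [z]) = positions P w \<union> (if P z then {Suc (length w)} else {})"
  by (auto simp: positions_def nth_append le_Suc_eq)

lemma filter_pattern_determines:
  assumes "length w1 = length w2" "\<forall>i<length w1. P (w1 ! i) = P (w2 ! i)"
    "filter P w1 = filter P w2" "filter (\<lambda>z. \<not> P z) w1 = filter (\<lambda>z. \<not> P z) w2"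
  shows "w1 = w2"
  using assms
proof (induction w1 arbitrary: w2)
  case (Cons a w1)
  then obtain b w2' where w2: "w2 = b # w2'" by (cases w2) auto
  have "P a = P b" using Cons.prems(2) w2 by force
  moreover have "\<forall>i<length w1. P (w1 ! i) = P (w2' ! i)" using Cons.prems(2) w2 by force
  ultimately show ?case
    using Cons.IH[of w2'] Cons.prems w2 by (cases "P a") auto
qed simp

definition inr_positions :: "('a + 'b) list \<Rightarrow> nat set" where
  "inr_positions w = positions (\<lambda>z. \<not> isl z) w"

lemma shuffles_iff_filter:
  "w \<in> shuffles (map Inl u) (map Inr v) \<longleftrightarrow>
     filter isl w = map Inl u \<and> filter (\<lambda>z. \<not> isl z) w = map Inr v"
proof -
  have "shuffles (map Inl u) (map Inr v) = partition isl -` {(map Inl u, map Inr v)}"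
    by (rule inv_image_partition[symmetric]) auto
  then show ?thesis by (simp add: o_def)
qed

lemma inl_positions: "positions isl w = {1..length w} - inr_positions w"
  by (auto simp: positions_def inr_positions_def)

lemma shuffle_nth:
  assumes w: "w \<in> shuffles (map Inl u) (map Inr v)"
  shows "x \<in> inr_positions w \<Longrightarrow> w ! (x - 1) = Inr (v ! (rank (inr_positions w) x - 1))"
    and "x \<in> positions isl w \<Longrightarrow> w ! (x - 1) = Inl (u ! (rank (positions isl w) x - 1))"
  using positions_nth[of x "\<lambda>z. \<not> isl z" w] positions_nth[of x isl w] w
  by (auto simp: shuffles_iff_filter inr_positions_def)

lemma shuffle_lengths:
  assumes w: "w \<in> shuffles (map Inl u) (map Inr v)"
  shows "length u = card (positions isl w)" "length v = card (inr_positions w)"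
  using w card_positions[of isl w] card_positions[of "\<lambda>z. \<not> isl z" w]
  by (auto simp: shuffles_iff_filter inr_positions_def dest: arg_cong[of _ _ length])

lemma shuffle_determined:
  assumes "w1 \<in> shuffles (map Inl u) (map Inr v)" "w2 \<in> shuffles (map Inl u) (map Inr v)"
    and "inr_positions w1 = inr_positions w2"
  shows "w1 = w2"
proof (rule filter_pattern_determines[where P = isl])
  show len: "length w1 = length w2" using assms(1,2) by (simp add: length_shuffles)
  show "\<forall>i<length w1. isl (w1 ! i) = isl (w2 ! i)"
  proof (intro allI impI)
    fix i assume "i < length w1"
    then have "Suc i \<in> inr_positions w1 \<longleftrightarrow> Suc i \<in> inr_positions w2" using assms(3) by simp
    then show "isl (w1 ! i) = isl (w2 ! i)"
      using \<open>i < length w1\<close> len by (simp add: inr_positions_def positions_def)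
  qed
qed (use assms(1,2) in \<open>simp_all add: shuffles_iff_filter\<close>)

text \<open>Existence, built up from the last letter: the last position belongs to L or not.\<close>

lemma shuffle_exists:
  "L \<subseteq> {1..length u + length v} \<Longrightarrow> card L = length v \<Longrightarrow>
   \<exists>w\<in>shuffles (map Inl u) (map Inr v). inr_positions w = L"
proof (induction "length u + length v" arbitrary: u v L)
  case 0
  then show ?case by (simp add: inr_positions_def positions_def)
next
  case (Suc n)
  have fin: "finite L" using Suc.prems(1) finite_subset by blast
  show ?case
  proof (cases "Suc n \<in> L")
    case True
    then have "v \<noteq> []" using Suc.prems(2) fin by auto
    then obtain v' b where v: "v = v' @ [b]" by (metis rev_exhaust)
    have "L - {Suc n} \<subseteq> {1..length u + length v'}" "card (L - {Suc n}) = length v'"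
      using Suc.prems Suc.hyps(2) True v fin by auto
    moreover have "n = length u + length v'" using Suc.hyps(2) v by simp
    ultimately obtain w' where w': "w' \<in> shuffles (map Inl u) (map Inr v')"
        "inr_positions w' = L - {Suc n}"
      using Suc.hyps(1) by blast
    have "length w' = n" using w' Suc.hyps(2) v by (simp add: length_shuffles)
    then have "inr_positions (w' @ [Inr b]) = L"
      using w'(2) True by (simp add: inr_positions_def positions_snoc insert_absorb)
    moreover have "w' @ [Inr b] \<in> shuffles (map Inl u) (map Inr v)"
      using w'(1) v unfolding shuffles_iff_filter by simp
    ultimately show ?thesis by blast
  next
    case False
    have "L \<subseteq> {1..Suc n}" using Suc.prems(1) Suc.hyps(2) by simp
    then have "L \<subseteq> {1..n}" using False by (auto simp: subset_iff le_Suc_eq)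
    then have "length v \<le> n" using Suc.prems(2) card_mono[of "{1..n}" L] by simp
    then have "u \<noteq> []" using Suc.hyps(2) by auto
    then obtain u' a where u: "u = u' @ [a]" by (metis rev_exhaust)
    have "n = length u' + length v" using Suc.hyps(2) u by simp
    then obtain w' where w': "w' \<in> shuffles (map Inl u') (map Inr v)" "inr_positions w' = L"
      using Suc.hyps(1) Suc.prems(2) \<open>L \<subseteq> {1..n}\<close> by blast
    have "inr_positions (w' @ [Inl a]) = L"
      using w'(2) by (simp add: inr_positions_def positions_snoc)
    moreover have "w' @ [Inl a] \<in> shuffles (map Inl u) (map Inr v)"
      using w'(1) u unfolding shuffles_iff_filter by simp
    ultimately show ?thesis by blast
  qed
qed

text \<open>The sets L_V of an admissible cut are exactly the vertex sets closed under taking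
  children, and V is recovered from L_V as its top vertices (those with no ancestor in
  L_V).  Hence V \<mapsto> L_V is a bijection between admissible cuts and closed sets.\<close>

definition desc_closed :: "oforest \<Rightarrow> nat set \<Rightarrow> bool" where
  "desc_closed F L \<longleftrightarrow> L \<subseteq> {1..fst F} \<and> (\<forall>l k. snd F l = Some k \<longrightarrow> k \<in> L \<longrightarrow> l \<in> L)"

definition tops :: "oforest \<Rightarrow> nat set \<Rightarrow> nat set" where
  "tops F L = {x \<in> L. \<forall>y. is_desc F x y \<longrightarrow> y \<notin> L}"

lemma desc_closed_desc:
  assumes "desc_closed F L" "is_desc F x y" "y \<in> L"
  shows "x \<in> L"
  using assms(2,3) unfolding is_desc_def
  by (induct rule: trancl_induct) (use assms(1) in \<open>auto simp: desc_closed_def\<close>)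

lemma is_desc_trans: "is_desc F x y \<Longrightarrow> is_desc F y z \<Longrightarrow> is_desc F x z"
  by (auto simp: is_desc_def)

lemma is_desc_irrefl: "F \<in> oforests \<Longrightarrow> \<not> is_desc F x x"
  using oforestsD(3) by (simp add: is_desc_def)

lemma ht_less_desc:
  assumes F: "F \<in> oforests" and "is_desc F x y"
  shows "ht F y < ht F x"
  using assms(2) unfolding is_desc_def
  by (induct rule: trancl_induct) (auto dest: ht_less[OF F])

lemma cut_L_desc_closed:
  assumes F: "F \<in> oforests"
  shows "desc_closed F (cut_L F V)"
  unfolding desc_closed_def
proof (intro conjI allI impI)
  fix l k assume e: "snd F l = Some k" and k: "k \<in> cut_L F V"
  have "is_desc F l k" using e by (simp add: is_desc_def r_into_trancl')
  then have "\<exists>v\<in>V. is_desc F l v"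
    using k by (auto simp: cut_L_def intro: is_desc_trans)
  then show "l \<in> cut_L F V" using oforests_edge(1)[OF F e] by (simp add: cut_L_def)
qed (auto simp: cut_L_def)

lemma tops_cut_L:
  assumes F: "F \<in> oforests" and V: "admissible_cut F V"
  shows "tops F (cut_L F V) = V"
proof
  have VL: "V \<subseteq> cut_L F V" using V by (auto simp: admissible_cut_def cut_L_def)
  show "V \<subseteq> tops F (cut_L F V)"
  proof
    fix x assume x: "x \<in> V"
    have "y \<notin> cut_L F V" if xy: "is_desc F x y" for y
    proof
      assume "y \<in> cut_L F V"
      then consider "y \<in> V" | v where "v \<in> V" "is_desc F y v" by (auto simp: cut_L_def)
      then show False
      proof cases
        case 1
        then show False using V x xy is_desc_irrefl[OF F] unfolding admissible_cut_def by metis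
      next
        case 2
        then have "is_desc F x v" using xy is_desc_trans by blast
        moreover have "x \<noteq> v" using 2 xy is_desc_irrefl[OF F] is_desc_trans by blast
        ultimately show False using V x \<open>v \<in> V\<close> by (auto simp: admissible_cut_def)
      qed
    qed
    then show "x \<in> tops F (cut_L F V)" using x VL by (auto simp: tops_def)
  qed
  show "tops F (cut_L F V) \<subseteq> V"
    using VL by (auto simp: tops_def cut_L_def)
qed

lemma cut_L_tops:
  assumes F: "F \<in> oforests" and L: "desc_closed F L"
  shows "admissible_cut F (tops F L)" and "cut_L F (tops F L) = L"
proof -
  show "admissible_cut F (tops F L)"
    using L by (auto simp: admissible_cut_def tops_def desc_closed_def)
  have "x \<in> tops F L \<or> (\<exists>v\<in>tops F L. is_desc F x v)" if "x \<in> L" for x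
    using that
  proof (induction "ht F x" arbitrary: x rule: less_induct)
    case less
    show ?case
    proof (cases "x \<in> tops F L")
      case False
      then obtain y where y: "is_desc F x y" "y \<in> L" using less.prems by (auto simp: tops_def)
      then have "y \<in> tops F L \<or> (\<exists>v\<in>tops F L. is_desc F y v)"
        using less.hyps ht_less_desc[OF F] by blast
      then show ?thesis using y(1) is_desc_trans by blast
    qed simp
  qed
  then show "cut_L F (tops F L) = L"
    using L desc_closed_desc[OF L] by (auto simp: cut_L_def tops_def desc_closed_def)
qed

lemma cut_L_bij:
  assumes F: "F \<in> oforests"
  shows "bij_betw (cut_L F) {V. admissible_cut F V} {L. desc_closed F L}"
  by (rule bij_betw_byWitness[where f' = "tops F"])
     (auto simp: tops_cut_L[OF F] cut_L_tops[OF F] cut_L_desc_closed[OF F])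

lemma finite_desc_closed: "finite {L. desc_closed F L}"
  by (rule finite_subset[of _ "Pow {1..fst F}"]) (auto simp: desc_closed_def)

fun ordsum :: "('a \<Rightarrow> 'a \<Rightarrow> bool) \<Rightarrow> ('b \<Rightarrow> 'b \<Rightarrow> bool) \<Rightarrow> 'a + 'b \<Rightarrow> 'a + 'b \<Rightarrow> bool" where
  "ordsum pa pb (Inl a) (Inl a') = pa a a'"
| "ordsum pa pb (Inr b) (Inr b') = pb b b'"
| "ordsum pa pb (Inl a) (Inr b) = True"
| "ordsum pa pb (Inr b) (Inl a) = False"

text \<open>In a compatible word the B-letters occupy a descendant-closed set of positions,
  since no B-letter may sit directly above an A-letter.\<close>

lemma compatible_inr_positions_closed:
  assumes F: "F \<in> oforests" and c: "compatible (ordsum pa pb) F w"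
  shows "desc_closed F (inr_positions w)"
  unfolding desc_closed_def
proof (intro conjI allI impI)
  show "inr_positions w \<subseteq> {1..fst F}"
    using c by (auto simp: compatible_def inr_positions_def positions_def)
  fix l k assume e: "snd F l = Some k" and k: "k \<in> inr_positions w"
  have "ordsum pa pb (w ! (k - 1)) (w ! (l - 1))" using c e by (simp add: compatible_def)
  moreover have "\<not> isl (w ! (k - 1))" using k by (simp add: inr_positions_def positions_def)
  ultimately have "\<not> isl (w ! (l - 1))"
    by (cases "w ! (k - 1)"; cases "w ! (l - 1)") auto
  then show "l \<in> inr_positions w"
    using oforests_edge(1)[OF F e] c by (simp add: inr_positions_def positions_def compatible_def)
qed

lemma shuffle_in_lists:
  assumes "w \<in> shuffles (map Inl u) (map Inr v)"
  shows "w \<in> lists (A <+> B) \<longleftrightarrow> u \<in> lists A \<and> v \<in> lists B"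
  using set_shuffles[OF assms] by (auto simp: Plus_def)

text \<open>For a shuffle w of u and v whose B-positions L form a closed set, compatibility of w
  with F splits into compatibility of u with F restricted to the complement of L and of v
  with F restricted to L: edges inside each part are checked letter by letter, edges from
  an A-position to a B-position hold automatically, and there are no others.\<close>

lemma compatible_ordsum_shuffle:
  assumes F: "F \<in> oforests" and w: "w \<in> shuffles (map Inl u) (map Inr v)"
    and len: "length w = fst F" and L: "desc_closed F (inr_positions w)"
  defines "L \<equiv> inr_positions w"
  shows "compatible (ordsum pa pb) F w \<longleftrightarrow>
           compatible pa (of_restrict F ({1..fst F} - L)) u \<and> compatible pb (of_restrict F L) v"
proof -
  let ?Lc = "{1..fst F} - L"
  have Lc: "?Lc = positions isl w" using len by (simp add: L_def inl_positions)
  let ?R = "\<lambda>k l. ordsum pa pb (w ! (k - 1)) (w ! (l - 1))"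
  have in_Lc: "?R k l \<longleftrightarrow> pa (u ! (rank ?Lc k - 1)) (u ! (rank ?Lc l - 1))"
    if "k \<in> ?Lc" "l \<in> ?Lc" for k l
    using that shuffle_nth(2)[OF w] unfolding Lc by simp
  have in_L: "?R k l \<longleftrightarrow> pb (v ! (rank L k - 1)) (v ! (rank L l - 1))"
    if "k \<in> L" "l \<in> L" for k l
    using that shuffle_nth(1)[OF w] unfolding L_def by simp
  have across: "?R k l" if "k \<in> ?Lc" "l \<in> L" for k l
  proof -
    have "k \<in> positions isl w" using that(1) unfolding Lc .
    then show ?thesis
      using shuffle_nth(2)[OF w, of k] shuffle_nth(1)[OF w, of l] that(2) by (simp add: L_def)
  qed
  have closed: "l \<in> L" if "snd F l = Some k" "k \<in> L" for k l
    using L that unfolding L_def desc_closed_def by blast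
  have edge: "k \<in> {1..fst F} \<and> l \<in> {1..fst F}" if "snd F l = Some k" for k l
    using oforests_edge[OF F that] by simp
  have split: "(\<forall>k l. snd F l = Some k \<longrightarrow> ?R k l) \<longleftrightarrow>
        (\<forall>l\<in>?Lc. \<forall>k\<in>?Lc. snd F l = Some k \<longrightarrow> ?R k l) \<and>
        (\<forall>l\<in>L. \<forall>k\<in>L. snd F l = Some k \<longrightarrow> ?R k l)"
    using across closed edge by blast
  have fin: "finite ?Lc" "finite L"
    using L unfolding L_def desc_closed_def by (auto intro: finite_subset)
  have lengths: "length u = card ?Lc" "length v = card L"
    using shuffle_lengths[OF w] Lc by (simp_all add: L_def)
  have "compatible pa (of_restrict F ?Lc) u \<longleftrightarrow>
        (\<forall>l\<in>?Lc. \<forall>k\<in>?Lc. snd F l = Some k \<longrightarrow> ?R k l)"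
    unfolding compatible_of_restrict[OF fin(1)] using lengths(1) in_Lc by blast
  moreover have "compatible pb (of_restrict F L) v \<longleftrightarrow>
        (\<forall>l\<in>L. \<forall>k\<in>L. snd F l = Some k \<longrightarrow> ?R k l)"
    unfolding compatible_of_restrict[OF fin(2)] using lengths(2) in_L by blast
  moreover have "compatible (ordsum pa pb) F w \<longleftrightarrow> (\<forall>k l. snd F l = Some k \<longrightarrow> ?R k l)"
    using len by (simp add: compatible_def)
  ultimately show ?thesis using split by simp
qed

lemma card_complement_add:
  assumes "L \<subseteq> {1..n}"
  shows "card ({1..n} - L) + card L = (n::nat)"
proof -
  have "card L \<le> n" using card_mono[OF finite_atLeastAtMost assms] by simp
  moreover have "card ({1..n} - L) = n - card L"
    using assms by (simp add: card_Diff_subset finite_subset)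
  ultimately show ?thesis by simp
qed

text \<open>If w has the
  wrong length both sides vanish, because compatible u and v have |L^c| + |L| = n letters.\<close>

lemma SF_ordsum_shuffle:
  assumes F: "F \<in> oforests" and w: "w \<in> shuffles (map Inl u) (map Inr v)"
    and L: "desc_closed F (inr_positions w)"
  shows "(SF (A <+> B) (ordsum pa pb) F w :: 'k::field_char_0)
       = SF A pa (of_restrict F ({1..fst F} - inr_positions w)) u
         * SF B pb (of_restrict F (inr_positions w)) v"
proof (cases "length w = fst F")
  case True
  then show ?thesis
    using compatible_ordsum_shuffle[OF F w True L] shuffle_in_lists[OF w]
    by (simp add: SF_def)
next
  case False
  let ?L = "inr_positions w"
  have "?L \<subseteq> {1..fst F}" using L by (simp add: desc_closed_def)
  then have "card ({1..fst F} - ?L) + card ?L = fst F" by (rule card_complement_add)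
  then have "\<not> (compatible pa (of_restrict F ({1..fst F} - ?L)) u \<and> compatible pb (of_restrict F ?L) v)"
    using False length_shuffles[OF w] by (auto simp: compatible_def of_restrict_def)
  then show ?thesis using False by (auto simp: SF_def compatible_def)
qed

text \<open>Grouping the shuffles of u and v by their B-positions: for a closed set L there is
  exactly one shuffle with B-positions L when the product of coefficients is nonzero.\<close>

lemma sum_shuffles_with_inr_positions:
  assumes F: "F \<in> oforests" and L: "desc_closed F L"
  shows "(\<Sum>w\<in>{w \<in> shuffles (map Inl u) (map Inr v). inr_positions w = L}.
            (SF (A <+> B) (ordsum pa pb) F w :: 'k::field_char_0))
       = SF A pa (of_restrict F ({1..fst F} - L)) u * SF B pb (of_restrict F L) v"
    (is "(\<Sum>w\<in>?W. ?f w) = ?P")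
proof (cases "?P = 0")
  case True
  have "?f w = ?P" if "w \<in> ?W" for w using that SF_ordsum_shuffle[OF F, of w u v] L by simp
  then show ?thesis unfolding True by (intro sum.neutral ballI) simp
next
  case False
  then have "SF A pa (of_restrict F ({1..fst F} - L)) u \<noteq> (0::'k)"
    "SF B pb (of_restrict F L) v \<noteq> (0::'k)" by auto
  then have "compatible pa (of_restrict F ({1..fst F} - L)) u" "compatible pb (of_restrict F L) v"
    unfolding SF_def by meson+
  then have lengths: "length u = card ({1..fst F} - L)" "length v = card L"
    by (simp_all add: compatible_def of_restrict_def)
  have "L \<subseteq> {1..fst F}" using L by (simp add: desc_closed_def)
  then have "L \<subseteq> {1..length u + length v}"
    using lengths card_complement_add[of L "fst F"] by simp
  then have "\<exists>w\<in>shuffles (map Inl u) (map Inr v). inr_positions w = L"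
    using lengths(2) by (intro shuffle_exists) simp_all
  then obtain w0 where w0: "w0 \<in> ?W" by blast
  have "?W = {w0}"
  proof (intro equalityI subsetI)
    fix w assume "w \<in> ?W"
    then show "w \<in> {w0}" using w0 shuffle_determined[of w u v w0] by simp
  qed (use w0 in simp)
  then have "(\<Sum>w\<in>?W. ?f w) = ?f w0" by simp
  also have "\<dots> = ?P" using w0 SF_ordsum_shuffle[OF F, of w0 u v] L by simp
  finally show ?thesis .
qed

text \<open>Part (iii) for arbitrary alphabets: S^F(A \<oplus> B) = \<Sum>_V S^{Roo_V F}(A) S^{Lea_V F}(B),
  read off on the coefficient of every shuffle of an A-word u with a B-word v.\<close>

lemma SF_ordsum_coproduct:
  assumes F: "F \<in> oforests"
  shows "(\<Sum>w\<in>shuffles (map Inl u) (map Inr v). (SF (A <+> B) (ordsum pa pb) F w :: 'k::field_char_0))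
       = (\<Sum>V\<in>{V. admissible_cut F V}. SF A pa (Roo F V) u * SF B pb (Lea F V) v)"
proof -
  let ?S = "shuffles (map Inl u) (map Inr v)" and ?C = "{L. desc_closed F L}"
  let ?f = "\<lambda>w. SF (A <+> B) (ordsum pa pb) F w :: 'k"
  let ?P = "\<lambda>L. SF A pa (of_restrict F ({1..fst F} - L)) u * SF B pb (of_restrict F L) v"
  have closed: "inr_positions w \<in> ?C" if "?f w \<noteq> 0" for w
    using that compatible_inr_positions_closed[OF F] by (auto simp: SF_def split: if_splits)
  have "(\<Sum>L\<in>?C. if inr_positions w = L then ?f w else 0) = ?f w" for w
    using closed[of w] by (cases "?f w = 0") (simp_all add: finite_desc_closed)
  then have "(\<Sum>w\<in>?S. ?f w) = (\<Sum>w\<in>?S. \<Sum>L\<in>?C. if inr_positions w = L then ?f w else 0)"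
    by simp
  also have "\<dots> = (\<Sum>L\<in>?C. \<Sum>w\<in>{w \<in> ?S. inr_positions w = L}. ?f w)"
    by (subst sum.swap) (simp add: sum.inter_filter)
  also have "\<dots> = (\<Sum>L\<in>?C. ?P L)"
    by (rule sum.cong[OF refl]) (simp add: sum_shuffles_with_inr_positions[OF F])
  also have "\<dots> = (\<Sum>V\<in>{V. admissible_cut F V}. ?P (cut_L F V))"
    by (rule sum.reindex_bij_betw[OF cut_L_bij[OF F], symmetric])
  finally show ?thesis by (simp add: Roo_def Lea_def)
qed

theorem theorem3p2:
  shows
    "(\<forall>X (c :: oforest \<Rightarrow> 'k::field_char_0).
        finite X \<and> X \<subseteq> oforests \<and>
        (\<forall>w. (\<Sum>F\<in>X. c F * SF alphA precA F w) = 0)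
        \<longrightarrow> (\<forall>F\<in>X. c F = 0))
   \<and> (\<forall>F\<in>oforests. \<forall>G\<in>oforests.
        ser_mult (SF alphA precA F) (SF alphA precA G)
          = (SF alphA precA (of_prod F G) :: (int \<times> int) list \<Rightarrow> 'k))
   \<and> (\<forall>F\<in>oforests. \<forall>u v.
        (\<Sum>w\<in>shuffles (map Inl u) (map Inr v). (SF alphAB precAB F w :: 'k))
        = (\<Sum>V\<in>{V. admissible_cut F V}.
             SF alphA precA (Roo F V) u * SF alphA precA (Lea F V) v))"
proof -
  have alph: "alphAB = alphA <+> alphA" by (simp add: alphAB_def Plus_def)
  have prec: "precAB = ordsum precA precA"
  proof (intro ext)
    fix x y show "precAB x y = ordsum precA precA x y" by (cases x; cases y) simp_all
  qed
  show ?thesis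
    unfolding alph prec
    by (simp add: ser_mult_SF SF_ordsum_coproduct) (blast intro: SF_linear_independent)
qed

end
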